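(* Let $A=(\Sigma,q,N,\delta)$ be a well-formed LQCA, and let $A'=(\Sigma,q,N,\delta')$ where $\delta'(w)=\delta(w)/\|\delta(w)\|$ for all $w\in\Sigma^{|N|}$. Then $U_{A'}=U_A$, and $\|\delta'(w)\|=1$ for all $w$.
   Context: A linear quantum cellular automaton (LQCA) is a tuple $A=(\Sigma,q,N,\delta)$ where $\Sigma$ is a finite nonempty set of states, $N=(a_1,\dots,a_r)$ is a strictly increasing sequence of integers, $\delta:\Sigma^r\to\mathbb C^\Sigma$ satisfies $\|\delta(w)\|>0$ for all $w$ (with the standard norm on $\mathbb C^\Sigma$), and $q\in\Sigma$ satisfies $[\delta(q,\dots,q)](x)=1$ if $x=q$ and $0$ otherwise. A configuration is a map $c:\mathbb Z\to\Sigma$ with $c_i\ne q$ for only finitely many $i$; $\mathcal C_A$ is the set of configurations. With $c_{i+N}=(c_{i+a_1},\dots,c_{i+a_r})$, the time evolution operator is $U_A(d,c)=\prod_{i\in\mathbb Z}[\delta(c_{i+N})](d_i)$ for $c,d\in\mathcal C_A$, viewed as a linear operator on $\ell_2(\mathcal C_A)$. $A$ is well-formed if $U_A$ preserves the $\ell_2$ norm. *)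

theory Defs
  imports "HOL-Analysis.Analysis" "HOL-Library.Groups_Big_Fun"
begin

text \<open>States: a finite (automatically nonempty) type 'a. Neighbourhood N: an int list.
  Local transition function delta: words (lists of length |N|) to vectors in C^Sigma.\<close>

definition vnorm :: "('a::finite \<Rightarrow> complex) \<Rightarrow> real" where
  "vnorm v = sqrt (\<Sum>x\<in>UNIV. (cmod (v x))\<^sup>2)"

definition lqca :: "'a::finite \<Rightarrow> int list \<Rightarrow> ('a list \<Rightarrow> 'a \<Rightarrow> complex) \<Rightarrow> bool" where
  "lqca q N \<delta> \<longleftrightarrow> sorted_wrt (<) N
     \<and> (\<forall>w. length w = length N \<longrightarrow> vnorm (\<delta> w) > 0)
     \<and> \<delta> (replicate (length N) q) = (\<lambda>x. if x = q then 1 else 0)"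

definition configs :: "'a \<Rightarrow> (int \<Rightarrow> 'a) set" where
  "configs q = {c. finite {i. c i \<noteq> q}}"

definition nbhd :: "int list \<Rightarrow> (int \<Rightarrow> 'a) \<Rightarrow> int \<Rightarrow> 'a list" where
  "nbhd N c i = map (\<lambda>a. c (i + a)) N"

text \<open>U_A(d,c) = prod over i in Z of delta(c_{i+N})(d_i); the infinite product of a
  function that is 1 for all but finitely many i (Prod_any).\<close>
definition evol :: "int list \<Rightarrow> ('a list \<Rightarrow> 'a \<Rightarrow> complex) \<Rightarrow> (int \<Rightarrow> 'a) \<Rightarrow> (int \<Rightarrow> 'a) \<Rightarrow> complex" where
  "evol N \<delta> d c = Prod_any (\<lambda>i. \<delta> (nbhd N c i) (d i))"

text \<open>Well-formed: U_A, acting on l2(C_A) by (U f)(d) = sum_c U(d,c) f(c), preserves the l2 norm.\<close>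
definition well_formed :: "'a::finite \<Rightarrow> int list \<Rightarrow> ('a list \<Rightarrow> 'a \<Rightarrow> complex) \<Rightarrow> bool" where
  "well_formed q N \<delta> \<longleftrightarrow> lqca q N \<delta> \<and>
     (\<forall>f :: (int \<Rightarrow> 'a) \<Rightarrow> complex. (\<lambda>c. (cmod (f c))\<^sup>2) summable_on configs q \<longrightarrow>
        (\<forall>d\<in>configs q. (\<lambda>c. evol N \<delta> d c * f c) summable_on configs q) \<and>
        ((\<lambda>d. (cmod (\<Sum>\<^sub>\<infinity>c\<in>configs q. evol N \<delta> d c * f c))\<^sup>2) has_sum
           (\<Sum>\<^sub>\<infinity>c\<in>configs q. (cmod (f c))\<^sup>2)) (configs q))"

end

theory Submission
  imports Defs
begin

text \<open>Fix a configuration c. The column d \<mapsto> U(d,c) is the image under U of the unit vector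
  at c, so it has norm 1. On the other hand U(d,c) is a product of independent local factors,
  one per cell, and a cell whose neighbourhood is quiescent contributes the factor 1 if d is
  quiescent there and 0 otherwise; hence the squared norm of the column is the product of
  |\<delta>(c_{i+N})|^2 over the finitely many non-quiescent neighbourhoods. This product is therefore 1,
  and normalising \<delta> divides every U(d,c) by exactly this product.\<close>

lemma vnorm_nonneg: "vnorm v \<ge> 0"
  unfolding vnorm_def by (simp add: sum_nonneg)

lemma vnorm_power2: "(vnorm v)\<^sup>2 = (\<Sum>x\<in>UNIV. (cmod (v x))\<^sup>2)"
  unfolding vnorm_def by (simp add: sum_nonneg)

lemma vnorm_divide: "vnorm (\<lambda>x. v x / complex_of_real r) = vnorm v / \<bar>r\<bar>"
proof -
  have "(\<Sum>x\<in>UNIV. (cmod (v x / complex_of_real r))\<^sup>2) = (\<Sum>x\<in>UNIV. (cmod (v x))\<^sup>2) / r\<^sup>2"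
    by (simp add: norm_divide power_divide sum_divide_distrib)
  then show ?thesis
    by (simp add: vnorm_def real_sqrt_divide)
qed

lemma vnorm_unit_vector: "vnorm (\<lambda>x. if x = q then 1 else 0) = 1"
proof -
  have squares: "(\<lambda>x. (cmod (if x = q then 1 else 0))\<^sup>2) = (\<lambda>x. if x = q then 1 else (0::real))"
    by auto
  show ?thesis
    unfolding vnorm_def squares by simp
qed

definition active_cells :: "int list \<Rightarrow> 'a \<Rightarrow> (int \<Rightarrow> 'a) \<Rightarrow> int set" where
  "active_cells N q c = {i. nbhd N c i \<noteq> replicate (length N) q}"

lemma nbhd_eq_quiescent_iff:
  "nbhd N c i = replicate (length N) q \<longleftrightarrow> (\<forall>a\<in>set N. c (i + a) = q)"
  by (simp add: nbhd_def map_eq_conv map_replicate_const[symmetric] del: map_replicate_const)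

lemma finite_active_cells:
  assumes "c \<in> configs q"
  shows "finite (active_cells N q c)"
proof (rule finite_subset)
  show "active_cells N q c \<subseteq> (\<Union>a\<in>set N. (\<lambda>j. j - a) ` {j. c j \<noteq> q})"
    by (force simp: active_cells_def nbhd_eq_quiescent_iff)
  show "finite (\<Union>a\<in>set N. (\<lambda>j. j - a) ` {j. c j \<noteq> q})"
    using assms by (simp add: configs_def)
qed

lemma evol_eq_prod:
  assumes "\<delta> (replicate (length N) q) q = 1" and "finite T"
    and "active_cells N q c \<subseteq> T" and "{i. d i \<noteq> q} \<subseteq> T"
  shows "evol N \<delta> d c = (\<Prod>i\<in>T. \<delta> (nbhd N c i) (d i))"
  unfolding evol_def
proof (rule Prod_any.expand_superset[OF assms(2)])
  show "{i. \<delta> (nbhd N c i) (d i) \<noteq> 1} \<subseteq> T"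
    using assms(1,3,4) by (force simp: active_cells_def)
qed

lemma evol_eq_prod_active_cells:
  assumes "\<delta> (replicate (length N) q) q = 1" and "c \<in> configs q" and "d \<in> configs q"
  shows "evol N \<delta> d c = (\<Prod>i\<in>active_cells N q c \<union> {i. d i \<noteq> q}. \<delta> (nbhd N c i) (d i))"
  using assms finite_active_cells[OF assms(2)] by (intro evol_eq_prod) (auto simp: configs_def)

lemma evol_eq_0:
  assumes quiescent: "\<delta> (replicate (length N) q) = (\<lambda>x. if x = q then 1 else 0)"
    and "c \<in> configs q" and "d \<in> configs q"
    and "i \<notin> active_cells N q c" and "d i \<noteq> q"
  shows "evol N \<delta> d c = 0"
proof -
  have "evol N \<delta> d c = (\<Prod>i\<in>active_cells N q c \<union> {i. d i \<noteq> q}. \<delta> (nbhd N c i) (d i))"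
    using assms(2,3) by (intro evol_eq_prod_active_cells) (simp add: quiescent)
  moreover have "\<delta> (nbhd N c i) (d i) = 0"
    using assms(4,5) by (simp add: active_cells_def quiescent)
  ultimately show ?thesis
    using assms(2-5) finite_active_cells[OF assms(2)]
    by (auto simp: configs_def intro: prod_zero)
qed

lemma evol_column_has_sum:
  assumes quiescent: "\<delta> (replicate (length N) q) = (\<lambda>x. if x = q then 1 else 0)"
    and c: "c \<in> configs q"
  shows "((\<lambda>d. (cmod (evol N \<delta> d c))\<^sup>2) has_sum
           (\<Prod>i\<in>active_cells N q c. vnorm (\<delta> (nbhd N c i)))\<^sup>2) (configs q)"
proof -
  define S where "S = active_cells N q c"
  \<comment> \<open>The column is supported on the configurations that are quiescent off S; these are
    parametrised by their restrictions to S, over which the squared product factorises.\<close>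
  define extend where "extend = (\<lambda>g i. if i \<in> S then g i else q)"
  define D where "D = extend ` (S \<rightarrow>\<^sub>E UNIV)"
  have finite_S: "finite S"
    unfolding S_def using c by (rule finite_active_cells)
  have inj_extend: "inj_on extend (S \<rightarrow>\<^sub>E UNIV)"
    by (auto simp: inj_on_def extend_def PiE_iff extensional_def fun_eq_iff)
  have D_configs: "D \<subseteq> configs q"
    using finite_S by (auto simp: D_def configs_def extend_def intro: finite_subset[of _ S])
  have evol_extend: "evol N \<delta> (extend g) c = (\<Prod>i\<in>S. \<delta> (nbhd N c i) (g i))" for g
  proof -
    have "evol N \<delta> (extend g) c = (\<Prod>i\<in>S. \<delta> (nbhd N c i) (extend g i))"
      using finite_S by (intro evol_eq_prod) (auto simp: quiescent S_def extend_def)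
    then show ?thesis
      by (simp add: extend_def)
  qed
  have evol_outside_D: "evol N \<delta> d c = 0" if "d \<in> configs q - D" for d
  proof -
    have "d \<noteq> extend (restrict d S)"
      using that by (auto simp: D_def)
    then obtain i where "i \<notin> S" "d i \<noteq> q"
      by (auto simp: extend_def fun_eq_iff split: if_splits)
    then show ?thesis
      using that c by (intro evol_eq_0[where \<delta>=\<delta>]) (auto simp: quiescent S_def)
  qed
  have "((\<lambda>d. (cmod (evol N \<delta> d c))\<^sup>2) has_sum (\<Sum>d\<in>D. (cmod (evol N \<delta> d c))\<^sup>2)) (configs q)"
    using finite_S D_configs evol_outside_D by (intro has_sum_finite_neutralI) (auto simp: D_def finite_PiE)
  also have "(\<Sum>d\<in>D. (cmod (evol N \<delta> d c))\<^sup>2)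
      = (\<Sum>g\<in>S \<rightarrow>\<^sub>E UNIV. \<Prod>i\<in>S. (cmod (\<delta> (nbhd N c i) (g i)))\<^sup>2)"
    by (simp add: D_def sum.reindex[OF inj_extend] evol_extend prod_norm[symmetric] prod_power_distrib)
  also have "\<dots> = (\<Prod>i\<in>S. \<Sum>y\<in>UNIV. (cmod (\<delta> (nbhd N c i) y))\<^sup>2)"
    using finite_S by (simp add: prod_sum_PiE)
  also have "\<dots> = (\<Prod>i\<in>S. vnorm (\<delta> (nbhd N c i)))\<^sup>2"
    by (simp add: vnorm_power2 prod_power_distrib)
  finally show ?thesis
    by (simp add: S_def)
qed

lemma well_formed_column_has_sum:
  assumes "well_formed q N \<delta>" and c: "c \<in> configs q"
  shows "((\<lambda>d. (cmod (evol N \<delta> d c))\<^sup>2) has_sum 1) (configs q)"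
proof -
  define e :: "(int \<Rightarrow> 'a) \<Rightarrow> complex" where "e = (\<lambda>c'. if c' = c then 1 else 0)"
  have e_norm: "((\<lambda>c'. (cmod (e c'))\<^sup>2) has_sum 1) (configs q)"
    by (rule has_sum_finite_neutralI[where B="{c}"]) (use c in \<open>auto simp: e_def\<close>)
  have U_e: "(\<Sum>\<^sub>\<infinity>c'\<in>configs q. evol N \<delta> d c' * e c') = evol N \<delta> d c" for d
    by (rule infsumI, rule has_sum_finite_neutralI[where B="{c}"]) (use c in \<open>auto simp: e_def\<close>)
  have "((\<lambda>d. (cmod (\<Sum>\<^sub>\<infinity>c'\<in>configs q. evol N \<delta> d c' * e c'))\<^sup>2) has_sum
      (\<Sum>\<^sub>\<infinity>c'\<in>configs q. (cmod (e c'))\<^sup>2)) (configs q)"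
    using assms(1) has_sum_imp_summable[OF e_norm] by (simp add: well_formed_def)
  then show ?thesis
    by (simp add: U_e infsumI[OF e_norm])
qed

lemma well_formed_prod_vnorm_active_cells:
  assumes wf: "well_formed q N \<delta>" and c: "c \<in> configs q"
  shows "(\<Prod>i\<in>active_cells N q c. vnorm (\<delta> (nbhd N c i))) = 1"
proof -
  have "\<delta> (replicate (length N) q) = (\<lambda>x. if x = q then 1 else 0)"
    using wf by (simp add: well_formed_def lqca_def)
  then have "(\<Prod>i\<in>active_cells N q c. vnorm (\<delta> (nbhd N c i)))\<^sup>2 = 1"
    using has_sum_unique evol_column_has_sum well_formed_column_has_sum[OF wf c] c by blast
  moreover have "(\<Prod>i\<in>active_cells N q c. vnorm (\<delta> (nbhd N c i))) \<ge> 0"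
    by (simp add: prod_nonneg vnorm_nonneg)
  ultimately show ?thesis
    by (simp add: power2_eq_1_iff)
qed

lemma evol_normalize:
  assumes quiescent: "\<delta> (replicate (length N) q) = (\<lambda>x. if x = q then 1 else 0)"
    and c: "c \<in> configs q" and d: "d \<in> configs q"
  shows "evol N (\<lambda>w x. \<delta> w x / complex_of_real (vnorm (\<delta> w))) d c
    = evol N \<delta> d c / complex_of_real (\<Prod>i\<in>active_cells N q c. vnorm (\<delta> (nbhd N c i)))"
proof -
  define T where "T = active_cells N q c \<union> {i. d i \<noteq> q}"
  have finite_T: "finite T"
    using c d finite_active_cells[OF c] by (simp add: T_def configs_def)
  have "(\<Prod>i\<in>T. complex_of_real (vnorm (\<delta> (nbhd N c i))))
      = (\<Prod>i\<in>active_cells N q c. complex_of_real (vnorm (\<delta> (nbhd N c i))))"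
    using finite_T by (intro prod.mono_neutral_right)
      (auto simp: T_def active_cells_def quiescent vnorm_unit_vector)
  moreover have "evol N (\<lambda>w x. \<delta> w x / complex_of_real (vnorm (\<delta> w))) d c
      = (\<Prod>i\<in>T. \<delta> (nbhd N c i) (d i) / complex_of_real (vnorm (\<delta> (nbhd N c i))))"
    unfolding T_def using c d
    by (intro evol_eq_prod_active_cells) (simp add: quiescent vnorm_unit_vector)
  moreover have "evol N \<delta> d c = (\<Prod>i\<in>T. \<delta> (nbhd N c i) (d i))"
    unfolding T_def using c d by (intro evol_eq_prod_active_cells) (simp add: quiescent)
  ultimately show ?thesis
    by (simp add: prod_dividef)
qed

theorem mainTheorem6:
  fixes q :: "'a::finite" and N :: "int list" and \<delta> :: "'a list \<Rightarrow> 'a \<Rightarrow> complex"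
  assumes "well_formed q N \<delta>"
  defines "\<delta>' \<equiv> (\<lambda>w x. \<delta> w x / complex_of_real (vnorm (\<delta> w)))"
  shows "(\<forall>d\<in>configs q. \<forall>c\<in>configs q. evol N \<delta>' d c = evol N \<delta> d c)
     \<and> (\<forall>w. length w = length N \<longrightarrow> vnorm (\<delta>' w) = 1)"
proof (intro conjI ballI allI impI)
  have quiescent: "\<delta> (replicate (length N) q) = (\<lambda>x. if x = q then 1 else 0)"
    using assms(1) by (simp add: well_formed_def lqca_def)
  fix d c assume "d \<in> configs q" "c \<in> configs q"
  then show "evol N \<delta>' d c = evol N \<delta> d c"
    unfolding \<delta>'_def
    by (simp add: evol_normalize[where \<delta> = \<delta>, OF quiescent] well_formed_prod_vnorm_active_cells[OF assms(1)])
next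
  fix w :: "'a list" assume "length w = length N"
  then have "vnorm (\<delta> w) > 0"
    using assms(1) by (simp add: well_formed_def lqca_def)
  then show "vnorm (\<delta>' w) = 1"
    by (simp add: \<delta>'_def vnorm_divide)
qed

end
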